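(* If $f\in H^2(\tilde\mu)$, then $P_{\tilde\mu}\overline{f}$ is a constant function (equal $\tilde\mu$-a.e. to $\overline{\langle f,1\rangle_{H^2(\tilde\mu)}}$).
   Context: Let $\Omega=\{z:\mathrm{Re}\,z\ge-\tfrac12\}$ and $\mu$ the probability measure on $\Omega$ given by $d\mu=\sum_{n=-1}^\infty \frac{|\Gamma(\frac n2+iy+1)|^2}{2\pi(n+1)!}\,dy\,d\delta_{n/2}(x)$. Let $\Psi(z)=\frac{z}{1-z}$, which maps $\overline{\mathbb{D}}\setminus\{1\}$ onto $\Omega$, and let $\tilde\mu$ be the measure on $\overline{\mathbb{D}}$ with $\tilde\mu(E)=\mu(\Psi(E\setminus\{1\}))$ (so $\tilde\mu(\{1\})=0$). $H^2(\tilde\mu)$ is the closed linear span of $\{a^{z/(1-z)}:0<a\le1\}$ in $L^2(\tilde\mu)$ (where $a^{w}=e^{w\ln a}$), and $P_{\tilde\mu}$ is the orthogonal projection of $L^2(\tilde\mu)$ onto $H^2(\tilde\mu)$. *)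

theory Defs
  imports "HOL-Analysis.Analysis"
begin

text \<open>Density of the line component with index n = k - 1 (k = n + 1 :: nat):
  |Gamma(n/2 + i y + 1)|^2 / (2 pi (n+1)!).\<close>
definition mu_weight :: "nat \<Rightarrow> real \<Rightarrow> real" where
  "mu_weight k y = (cmod (Gamma (Complex ((real k - 1) / 2 + 1) y)))\<^sup>2 / (2 * pi * fact k)"

text \<open>The measure mu on Omega: sum over n >= -1 of the weighted Lebesgue measure
  on the vertical line Re z = n/2 (encoded with k = n + 1).\<close>
definition mu :: "complex measure" where
  "mu = distr (density (count_space (UNIV :: nat set) \<Otimes>\<^sub>M lborel)
                 (\<lambda>(k, y). ennreal (mu_weight k y)))
              borel (\<lambda>(k, y). Complex ((real k - 1) / 2) y)"

definition Psi :: "complex \<Rightarrow> complex" where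
  "Psi z = z / (1 - z)"

text \<open>tilde mu: the pull-back of mu to the closed disc via Psi, i.e. the image of mu
  under the inverse map w \<mapsto> w/(1+w); it gives no mass to {1}.\<close>
definition mu_tilde :: "complex measure" where
  "mu_tilde = distr mu borel (\<lambda>w. w / (1 + w))"

definition gen_fun :: "real \<Rightarrow> complex \<Rightarrow> complex" where
  "gen_fun a z = exp (Psi z * complex_of_real (ln a))"

definition L2 :: "complex measure \<Rightarrow> (complex \<Rightarrow> complex) set" where
  "L2 M = {f. f \<in> borel_measurable M \<and> integrable M (\<lambda>z. (cmod (f z))\<^sup>2)}"

definition L2_inner :: "complex measure \<Rightarrow> (complex \<Rightarrow> complex) \<Rightarrow> (complex \<Rightarrow> complex) \<Rightarrow> complex" where
  "L2_inner M f g = (\<integral>z. f z * cnj (g z) \<partial>M)"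

definition gen_span :: "(complex \<Rightarrow> complex) set" where
  "gen_span = {g. \<exists>n (c :: nat \<Rightarrow> complex) (a :: nat \<Rightarrow> real).
                   (\<forall>i<n. 0 < a i \<and> a i \<le> 1) \<and>
                   g = (\<lambda>z. \<Sum>i<n. c i * gen_fun (a i) z)}"

text \<open>H^2(M): closure of the span in L^2(M) (as a set of representatives).\<close>
definition H2 :: "complex measure \<Rightarrow> (complex \<Rightarrow> complex) set" where
  "H2 M = {f. f \<in> L2 M \<and>
             (\<forall>e>0. \<exists>g\<in>gen_span. (\<integral>z. (cmod (f z - g z))\<^sup>2 \<partial>M) < e)}"

text \<open>p represents (a.e.) the orthogonal projection of g onto the closed subspace H.\<close>
definition is_orth_proj :: "complex measure \<Rightarrow> (complex \<Rightarrow> complex) set \<Rightarrow>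
    (complex \<Rightarrow> complex) \<Rightarrow> (complex \<Rightarrow> complex) \<Rightarrow> bool" where
  "is_orth_proj M H g p \<longleftrightarrow> g \<in> L2 M \<and> p \<in> H \<and>
     (\<forall>h\<in>H. L2_inner M (\<lambda>z. g z - p z) h = 0)"

end

theory Submission
  imports Defs "HOL-Probability.Probability"
begin

(* Write E for integration against the probability measure mu_tilde.  The
   generators satisfy a^w b^w = (ab)^w, and each has E[a^w] = 1; hence E is multiplicative on
   their span, i.e. the (unconjugated) covariance E[gh] - E[g] E[h] vanishes there.  By
   Cauchy-Schwarz this covariance is L2-continuous in each argument, so it vanishes on
   H2 x H2.  For f, h in H2 this gives <conj f - conj E[f], h> = conj (E[fh] - E[f] E[h]) = 0,
   so the constant conj E[f] = conj <f, 1> is the orthogonal projection of conj f.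

   The analytic core is E[a^w] = 1.  In coordinates (k, y) of the lines Re w = (k-1)/2 this
   is a series of integrals of |Gamma((k+1)/2 + iy)|^2 a^(iy); these are Fourier transforms,
   computed by writing |Gamma|^2 as the transform of the autocorrelation of
   u |-> exp(s u - e^u) and applying Fourier inversion (proved by Gaussian regularisation).
   The k-th line contributes a^k/(1+a)^(k+1), and these sum to 1. *)

lemma L2_measurable: "u \<in> L2 M \<Longrightarrow> u \<in> borel_measurable M"
  unfolding L2_def by simp

lemma L2_square_integrable: "u \<in> L2 M \<Longrightarrow> integrable M (\<lambda>z. (cmod (u z))\<^sup>2)"
  unfolding L2_def by simp

lemma cnj_measurable: "cnj \<in> borel_measurable borel"
  by (intro borel_measurable_continuous_onI continuous_intros)

text \<open>Products of \<open>L\<^sup>2\<close> functions are integrable, by \<open>|uv| \<le> |u|\<^sup>2 + |v|\<^sup>2\<close>.\<close>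
lemma L2_mult_integrable:
  assumes u: "u \<in> L2 M" and v: "v \<in> L2 M"
  shows "integrable M (\<lambda>z. u z * v z)"
proof (rule Bochner_Integration.integrable_bound)
  show "integrable M (\<lambda>z. (cmod (u z))\<^sup>2 + (cmod (v z))\<^sup>2)"
    using L2_square_integrable[OF u] L2_square_integrable[OF v] by (rule Bochner_Integration.integrable_add)
  show "(\<lambda>z. u z * v z) \<in> borel_measurable M"
    using L2_measurable[OF u] L2_measurable[OF v] by measurable
  have "cmod (u z) * cmod (v z) \<le> (cmod (u z))\<^sup>2 + (cmod (v z))\<^sup>2" for z
    using sum_squares_bound[of "cmod (u z)" "cmod (v z)"]
      mult_nonneg_nonneg[OF norm_ge_zero norm_ge_zero, of "u z" "v z"]
    by linarith
  then show "AE z in M. norm (u z * v z) \<le> norm ((cmod (u z))\<^sup>2 + (cmod (v z))\<^sup>2)"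
    by (simp add: norm_mult)
qed

text \<open>\<open>L\<^sup>2(M)\<close> is closed under differences, by \<open>|u - v|\<^sup>2 \<le> 2|u|\<^sup>2 + 2|v|\<^sup>2\<close>.\<close>
lemma L2_diff:
  assumes u: "u \<in> L2 M" and v: "v \<in> L2 M"
  shows "(\<lambda>z. u z - v z) \<in> L2 M"
proof -
  have [measurable]: "u \<in> borel_measurable M" "v \<in> borel_measurable M"
    using u v by (simp_all add: L2_measurable)
  have "integrable M (\<lambda>z. (cmod (u z - v z))\<^sup>2)"
  proof (rule Bochner_Integration.integrable_bound)
    show "integrable M (\<lambda>z. 2 * (cmod (u z))\<^sup>2 + 2 * (cmod (v z))\<^sup>2)"
      using L2_square_integrable[OF u] L2_square_integrable[OF v] by auto
    have "(cmod (u z - v z))\<^sup>2 \<le> 2 * (cmod (u z))\<^sup>2 + 2 * (cmod (v z))\<^sup>2" for z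
    proof -
      have "(cmod (u z - v z))\<^sup>2 \<le> (cmod (u z) + cmod (v z))\<^sup>2"
        by (simp add: power_mono norm_triangle_ineq4)
      also have "\<dots> \<le> 2 * (cmod (u z))\<^sup>2 + 2 * (cmod (v z))\<^sup>2"
        by (smt (verit) sum_squares_bound power2_sum)
      finally show ?thesis .
    qed
    then show "AE z in M. norm ((cmod (u z - v z))\<^sup>2) \<le> norm (2 * (cmod (u z))\<^sup>2 + 2 * (cmod (v z))\<^sup>2)"
      by simp
  qed measurable
  then show ?thesis unfolding L2_def by simp
qed

text \<open>Cauchy--Schwarz in \<open>L\<^sup>2(M)\<close> (no conjugation is needed for the bound).\<close>
lemma L2_Cauchy_Schwarz:
  assumes u: "u \<in> L2 M" and v: "v \<in> L2 M"
  shows "(cmod (\<integral>z. u z * v z \<partial>M))\<^sup>2 \<le> (\<integral>z. (cmod (u z))\<^sup>2 \<partial>M) * (\<integral>z. (cmod (v z))\<^sup>2 \<partial>M)"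
proof -
  have [measurable]: "u \<in> borel_measurable M" "v \<in> borel_measurable M"
    using u v by (simp_all add: L2_measurable)
  define A where "A = (\<integral>z. cmod (u z) * cmod (v z) \<partial>M)"
  define Nu where "Nu = (\<integral>z. (cmod (u z))\<^sup>2 \<partial>M)"
  define Nv where "Nv = (\<integral>z. (cmod (v z))\<^sup>2 \<partial>M)"
  have A: "A \<ge> 0" and Nu: "Nu \<ge> 0" and Nv: "Nv \<ge> 0"
    unfolding A_def Nu_def Nv_def by (auto intro!: integral_nonneg_AE)
  have "integrable M (\<lambda>z. cmod (u z) * cmod (v z))"
    using integrable_norm[OF L2_mult_integrable[OF u v]] by (simp add: norm_mult)
  then have E1: "(\<integral>\<^sup>+z. ennreal (cmod (u z)) * ennreal (cmod (v z)) \<partial>M) = ennreal A"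
    unfolding A_def by (subst nn_integral_eq_integral[symmetric]) (auto simp: ennreal_mult)
  have E2: "(\<integral>\<^sup>+z. ennreal (cmod (w z)) ^ 2 \<partial>M) = ennreal (\<integral>z. (cmod (w z))\<^sup>2 \<partial>M)"
    if "w \<in> L2 M" for w
    using L2_square_integrable[OF that] by (subst nn_integral_eq_integral[symmetric]) (auto simp: ennreal_power)
  have "(\<integral>\<^sup>+z. ennreal (cmod (u z)) * ennreal (cmod (v z)) \<partial>M)\<^sup>2
      \<le> (\<integral>\<^sup>+z. ennreal (cmod (u z)) ^ 2 \<partial>M) * (\<integral>\<^sup>+z. ennreal (cmod (v z)) ^ 2 \<partial>M)"
    by (rule Cauchy_Schwarz_nn_integral) measurable
  then have "ennreal (A\<^sup>2) \<le> ennreal (Nu * Nv)"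
    unfolding E1 E2[OF u] E2[OF v] Nu_def[symmetric] Nv_def[symmetric]
    by (simp only: ennreal_power[OF A] ennreal_mult[OF Nu Nv])
  then have AN: "A\<^sup>2 \<le> Nu * Nv" using Nu Nv by simp
  have "cmod (\<integral>z. u z * v z \<partial>M) \<le> A"
    unfolding A_def using integral_norm_bound[of M "\<lambda>z. u z * v z"] by (simp add: norm_mult)
  then have "(cmod (\<integral>z. u z * v z \<partial>M))\<^sup>2 \<le> A\<^sup>2" by (rule power_mono) simp
  also note AN
  finally show ?thesis unfolding Nu_def Nv_def .
qed

lemma L2_bounded:
  assumes "prob_space M" "u \<in> borel_measurable M" "AE z in M. cmod (u z) \<le> B"
  shows "u \<in> L2 M"
proof -
  interpret prob_space M by fact
  have "AE z in M. norm ((cmod (u z))\<^sup>2) \<le> B\<^sup>2"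
    using assms(3) by eventually_elim (simp add: power_mono)
  then have "integrable M (\<lambda>z. (cmod (u z))\<^sup>2)"
    using assms(2) by (intro integrable_const_bound[where B="B\<^sup>2"]) auto
  then show "u \<in> L2 M" using assms(2) unfolding L2_def by simp
qed

lemma L2_const: "prob_space M \<Longrightarrow> (\<lambda>_. c) \<in> L2 M"
  by (rule L2_bounded[where B="cmod c"]) auto

lemma L2_integrable: "prob_space M \<Longrightarrow> u \<in> L2 M \<Longrightarrow> integrable M u"
  using L2_mult_integrable[of u M "\<lambda>_. 1"] L2_const[of M 1] by simp

lemma L2_integral_square_bound:
  "prob_space M \<Longrightarrow> u \<in> L2 M \<Longrightarrow> (cmod (integral\<^sup>L M u))\<^sup>2 \<le> (\<integral>z. (cmod (u z))\<^sup>2 \<partial>M)"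
  using L2_Cauchy_Schwarz[of u M "\<lambda>_. 1"] L2_const[of M 1] by (simp add: prob_space.prob_space)

text \<open>The theorem says precisely that it
  vanishes on \<open>H\<^sup>2 \<times> H\<^sup>2\<close>: \<open>\<mu>\<^sup>~\<close> is multiplicative on \<open>H\<^sup>2\<close>.\<close>
definition covariance :: "complex measure \<Rightarrow> (complex \<Rightarrow> complex) \<Rightarrow> (complex \<Rightarrow> complex) \<Rightarrow> complex" where
  "covariance M u v = (\<integral>z. u z * v z \<partial>M) - integral\<^sup>L M u * integral\<^sup>L M v"

lemma covariance_commute: "covariance M u v = covariance M v u"
  unfolding covariance_def by (simp add: mult.commute)

text \<open>Continuity of the covariance: \<open>|cov(u,v)|\<^sup>2 \<le> 4 \<parallel>u\<parallel>\<^sup>2 \<parallel>v\<parallel>\<^sup>2\<close>, from Cauchy--Schwarz for both terms.\<close>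
lemma covariance_bound:
  assumes P: "prob_space M" and u: "u \<in> L2 M" and v: "v \<in> L2 M"
  shows "(cmod (covariance M u v))\<^sup>2 \<le> 4 * (\<integral>z. (cmod (u z))\<^sup>2 \<partial>M) * (\<integral>z. (cmod (v z))\<^sup>2 \<partial>M)"
proof -
  define Nu where "Nu = (\<integral>z. (cmod (u z))\<^sup>2 \<partial>M)"
  define Nv where "Nv = (\<integral>z. (cmod (v z))\<^sup>2 \<partial>M)"
  define X where "X = (\<integral>z. u z * v z \<partial>M)"
  define Y where "Y = integral\<^sup>L M u * integral\<^sup>L M v"
  have X: "(cmod X)\<^sup>2 \<le> Nu * Nv" unfolding X_def Nu_def Nv_def by (rule L2_Cauchy_Schwarz[OF u v])
  have "(cmod Y)\<^sup>2 = (cmod (integral\<^sup>L M u))\<^sup>2 * (cmod (integral\<^sup>L M v))\<^sup>2"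
    unfolding Y_def by (simp add: norm_mult power_mult_distrib)
  also have "\<dots> \<le> Nu * Nv"
    unfolding Nu_def Nv_def using L2_integral_square_bound[OF P u] L2_integral_square_bound[OF P v]
    by (intro mult_mono) (auto intro: order.trans[OF zero_le_power2])
  finally have Y: "(cmod Y)\<^sup>2 \<le> Nu * Nv" .
  have "(cmod (X - Y))\<^sup>2 \<le> (cmod X + cmod Y)\<^sup>2" by (simp add: power_mono norm_triangle_ineq4)
  also have "\<dots> \<le> 2 * (cmod X)\<^sup>2 + 2 * (cmod Y)\<^sup>2"
    using sum_squares_bound[of "cmod X" "cmod Y"] by (simp add: power2_sum)
  finally show ?thesis using X Y unfolding covariance_def X_def Y_def Nu_def Nv_def by linarith
qed

lemma covariance_diff_left:
  assumes P: "prob_space M" and f: "f \<in> L2 M" and g: "g \<in> L2 M" and k: "k \<in> L2 M"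
  shows "covariance M f k = covariance M (\<lambda>z. f z - g z) k + covariance M g k"
proof -
  have "(\<integral>z. (f z - g z) * k z \<partial>M) = (\<integral>z. f z * k z - g z * k z \<partial>M)"
    by (simp add: algebra_simps)
  also have "\<dots> = (\<integral>z. f z * k z \<partial>M) - (\<integral>z. g z * k z \<partial>M)"
    using L2_mult_integrable[OF f k] L2_mult_integrable[OF g k] by (rule Bochner_Integration.integral_diff)
  finally have A: "(\<integral>z. (f z - g z) * k z \<partial>M) = (\<integral>z. f z * k z \<partial>M) - (\<integral>z. g z * k z \<partial>M)" .
  have B: "(\<integral>z. f z - g z \<partial>M) = integral\<^sup>L M f - integral\<^sup>L M g"
    using L2_integrable[OF P f] L2_integrable[OF P g] by (rule Bochner_Integration.integral_diff)
  show ?thesis unfolding covariance_def A B by (simp add: algebra_simps)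
qed

text \<open>By the bound above, \<open>covariance M u\<close> is \<open>L\<^sup>2\<close>-continuous, so it vanishes at every \<open>h\<close>
  that can be approximated by functions at which it vanishes.\<close>
lemma covariance_zero_by_approximation:
  assumes P: "prob_space M" and u: "u \<in> L2 M" and h: "h \<in> L2 M"
    and approx: "\<And>e. e > 0 \<Longrightarrow> \<exists>k\<in>L2 M. covariance M u k = 0 \<and> (\<integral>z. (cmod (h z - k z))\<^sup>2 \<partial>M) < e"
  shows "covariance M u h = 0"
proof -
  define N where "N = (\<integral>z. (cmod (u z))\<^sup>2 \<partial>M)"
  have N: "N \<ge> 0" unfolding N_def by (rule integral_nonneg_AE) auto
  have "(cmod (covariance M u h))\<^sup>2 \<le> 0 + e" if e: "e > 0" for e
  proof -
    obtain k where k: "k \<in> L2 M" "covariance M u k = 0"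
      and hk: "(\<integral>z. (cmod (h z - k z))\<^sup>2 \<partial>M) < e / (4 * N + 1)"
      using approx[of "e / (4 * N + 1)"] e N by auto
    have "covariance M u h = covariance M (\<lambda>z. h z - k z) u"
      using covariance_diff_left[OF P h k(1) u] k(2) by (simp add: covariance_commute)
    then have "(cmod (covariance M u h))\<^sup>2 \<le> 4 * (\<integral>z. (cmod (h z - k z))\<^sup>2 \<partial>M) * N"
      unfolding N_def using covariance_bound[OF P L2_diff[OF h k(1)] u] by simp
    also have "\<dots> \<le> 4 * (e / (4 * N + 1)) * N" using hk N by (intro mult_right_mono) auto
    also have "\<dots> \<le> e" using e N by (simp add: field_simps)
    finally show ?thesis by simp
  qed
  then have "(cmod (covariance M u h))\<^sup>2 \<le> 0" by (rule field_le_epsilon)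
  then show ?thesis by simp
qed

lemma gaussian_integrable:
  fixes n :: real assumes "n > 0"
  shows "integrable lborel (\<lambda>y. exp (-(y/n)\<^sup>2/2))"
proof -
  have "integrable lborel (\<lambda>y. sqrt (2*pi*n\<^sup>2) * normal_density 0 n y)"
    using assms by (intro integrable_mult_right integrable_normal_density) simp
  moreover have "sqrt (2*pi*n\<^sup>2) * normal_density 0 n y = exp (-(y/n)\<^sup>2/2)" for y
    using assms by (simp add: normal_density_def power_divide)
  ultimately show ?thesis by simp
qed

text \<open>Fourier transform of the Gaussian, from the characteristic function of the standard
  normal distribution.\<close>
lemma gaussian_fourier_transform:
  fixes n t :: real assumes n: "n > 0"
  shows "(\<integral>y. complex_of_real (exp (-(y/n)\<^sup>2/2)) * iexp (y * t) \<partial>lborel)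
          = complex_of_real (n * sqrt (2*pi) * exp (-(n*t)\<^sup>2/2))"
proof -
  have "complex_of_real (exp (-(n*t)\<^sup>2/2)) = char std_normal_distribution (n*t)"
    by (simp add: char_std_normal_distribution)
  also have "\<dots> = (\<integral>x. std_normal_density x *\<^sub>R iexp (n*t*x) \<partial>lborel)"
    unfolding char_def by (subst integral_density) auto
  also have "\<dots> = \<bar>1/n\<bar> *\<^sub>R (\<integral>y. std_normal_density (0 + 1/n*y) *\<^sub>R iexp (n*t*(0 + 1/n*y)) \<partial>lborel)"
    by (rule lborel_integral_real_affine) (use n in auto)
  also have "(\<lambda>y. std_normal_density (0 + 1/n*y) *\<^sub>R iexp (n*t*(0 + 1/n*y)))
      = (\<lambda>y. complex_of_real (1/sqrt (2*pi)) * (complex_of_real (exp (-(y/n)\<^sup>2/2)) * iexp (y * t)))"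
    using n by (auto simp: std_normal_density_def scaleR_conv_of_real mult_ac)
  finally show ?thesis
    using n by (simp add: scaleR_conv_of_real field_simps)
qed

text \<open>Gaussian-regularised Fourier inversion: pairing the transform \<open>R\<close> of \<open>r\<close> with the
  Gaussian \<open>exp (-(y/n)\<^sup>2/2)\<close> gives the average of \<open>r\<close> against a Gaussian of width \<open>1/n\<close>
  centred at \<open>-c\<close> (Fubini plus the Gaussian transform above).\<close>
lemma fourier_gaussian_regularised:
  fixes r R :: "real \<Rightarrow> real" and n c :: real
  assumes n: "n > 0"
    and r_int: "integrable lborel r"
    and R_ft: "\<And>y. (\<integral>x. complex_of_real (r x) * iexp (y*x) \<partial>lborel) = complex_of_real (R y)"
  shows "(\<integral>y. complex_of_real (R y) * iexp (y*c) * complex_of_real (exp (-(y/n)\<^sup>2/2)) \<partial>lborel)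
     = complex_of_real (2*pi * (\<integral>z. std_normal_density z * r (-c + z/n) \<partial>lborel))"
proof -
  have [measurable]: "r \<in> borel_measurable borel" using r_int by auto
  define K where "K y = exp (-(y/n)\<^sup>2/2)" for y
  have K_int: "integrable lborel K" unfolding K_def using gaussian_integrable[OF n] .
  have K_pos: "K y \<ge> 0" for y unfolding K_def by simp
  define F where "F = (\<lambda>y x. complex_of_real (K y * r x) * iexp (y*(x+c)))"
  have normF: "norm (F y x) = K y * \<bar>r x\<bar>" for y x
    unfolding F_def using K_pos by (simp add: norm_mult abs_mult)
  have F_int: "integrable (lborel \<Otimes>\<^sub>M lborel) (case_prod F)"
  proof (rule lborel_pair.Fubini_integrable)
    show "case_prod F \<in> borel_measurable (lborel \<Otimes>\<^sub>M lborel)"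
      unfolding F_def K_def by measurable
    show "integrable lborel (\<lambda>y. LBINT x. norm (case_prod F (y, x)))"
      using K_int by (simp add: normF)
    have "integrable lborel (\<lambda>x. F y x)" for y
    proof (rule Bochner_Integration.integrable_bound[where f="\<lambda>x. K y * r x"])
      show "integrable lborel (\<lambda>x. K y * r x)" using r_int by auto
      show "(\<lambda>x. F y x) \<in> borel_measurable lborel" unfolding F_def K_def by measurable
      show "AE x in lborel. norm (F y x) \<le> norm (K y * r x)" using K_pos by (auto simp: normF abs_mult)
    qed
    then show "AE y in lborel. integrable lborel (\<lambda>x. case_prod F (y, x))" by simp
  qed
  have inner_x: "(\<integral>x. F y x \<partial>lborel) = complex_of_real (R y) * iexp (y*c) * complex_of_real (K y)" for y
  proof -
    have "(\<lambda>x. F y x) = (\<lambda>x. (complex_of_real (K y) * iexp (y*c)) * (complex_of_real (r x) * iexp (y*x)))"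
      unfolding F_def by (auto simp: distrib_left exp_add mult_ac)
    then have "(\<integral>x. F y x \<partial>lborel) = complex_of_real (K y) * iexp (y*c) * complex_of_real (R y)"
      by (simp only: integral_mult_right_zero R_ft)
    then show ?thesis by (simp add: mult_ac)
  qed
  have inner_y: "(\<integral>y. F y x \<partial>lborel) = complex_of_real (r x * (n * sqrt (2*pi) * exp (-(n*(x+c))\<^sup>2/2)))" for x
  proof -
    have "(\<lambda>y. F y x) = (\<lambda>y. complex_of_real (r x) * (complex_of_real (exp (-(y/n)\<^sup>2/2)) * iexp (y * (x+c))))"
      unfolding F_def K_def by (auto simp: mult_ac)
    then have "(\<integral>y. F y x \<partial>lborel)
        = complex_of_real (r x) * (\<integral>y. complex_of_real (exp (-(y/n)\<^sup>2/2)) * iexp (y * (x+c)) \<partial>lborel)"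
      by (simp only: integral_mult_right_zero)
    also have "\<dots> = complex_of_real (r x) * complex_of_real (n * sqrt (2*pi) * exp (-(n*(x+c))\<^sup>2/2))"
      by (simp only: gaussian_fourier_transform[OF n])
    finally show ?thesis by (simp only: of_real_mult)
  qed
  have "(\<integral>y. complex_of_real (R y) * iexp (y*c) * complex_of_real (K y) \<partial>lborel)
      = (\<integral>x. (\<integral>y. F y x \<partial>lborel) \<partial>lborel)"
    using lborel_pair.Fubini_integral[OF F_int] by (simp add: inner_x)
  also have "\<dots> = complex_of_real (\<integral>x. r x * (n * sqrt (2*pi) * exp (-(n*(x+c))\<^sup>2/2)) \<partial>lborel)"
    by (simp only: inner_y integral_complex_of_real)
  also have "(\<integral>x. r x * (n * sqrt (2*pi) * exp (-(n*(x+c))\<^sup>2/2)) \<partial>lborel)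
      = \<bar>1/n\<bar> *\<^sub>R (\<integral>z. r (-c + 1/n*z) * (n * sqrt (2*pi) * exp (-(n*((-c + 1/n*z)+c))\<^sup>2/2)) \<partial>lborel)"
    by (rule lborel_integral_real_affine) (use n in auto)
  also have "(\<lambda>z. r (-c + 1/n*z) * (n * sqrt (2*pi) * exp (-(n*((-c + 1/n*z)+c))\<^sup>2/2)))
      = (\<lambda>z. n * (2*pi) * (std_normal_density z * r (-c + z/n)))"
    using n by (auto simp: std_normal_density_def field_simps real_sqrt_mult)
  finally show ?thesis unfolding K_def using n by simp
qed

definition gauss_kernel :: "nat \<Rightarrow> real \<Rightarrow> real" where
  "gauss_kernel k y = exp (-(y / real (Suc k))\<^sup>2/2)"

lemma gauss_kernel_measurable [measurable]: "gauss_kernel k \<in> borel_measurable borel"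
  unfolding gauss_kernel_def by measurable

lemma gauss_kernel_bounds: "0 \<le> gauss_kernel k y" "gauss_kernel k y \<le> 1"
  unfolding gauss_kernel_def by auto

lemma gauss_kernel_incseq: "incseq (\<lambda>k. gauss_kernel k y)"
proof (rule incseq_SucI)
  fix k
  have "(y / real (Suc (Suc k)))\<^sup>2 \<le> (y / real (Suc k))\<^sup>2"
    unfolding power_divide by (intro divide_left_mono) (auto simp: power_mono)
  then show "gauss_kernel k y \<le> gauss_kernel (Suc k) y" unfolding gauss_kernel_def by simp
qed

lemma gauss_kernel_tendsto: "(\<lambda>k. gauss_kernel k y) \<longlonglongrightarrow> 1"
proof -
  have "(\<lambda>k. y / real (Suc k)) \<longlonglongrightarrow> y * 0" unfolding divide_inverse
    by (intro tendsto_intros LIMSEQ_inverse_real_of_nat)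
  then have "(\<lambda>k. exp (-(y / real (Suc k))\<^sup>2/2)) \<longlonglongrightarrow> exp (-(y*0)\<^sup>2/2)"
    by (intro tendsto_intros) auto
  then show ?thesis unfolding gauss_kernel_def by simp
qed

text \<open>As the width of the Gaussian shrinks, the regularised integrals converge to \<open>2\<pi> r(-c)\<close>
  for continuous bounded \<open>r\<close> (dominated convergence).\<close>
lemma fourier_regularised_limit:
  fixes r R :: "real \<Rightarrow> real" and B c :: real
  assumes r_int: "integrable lborel r" and r_cont: "continuous_on UNIV r"
    and r_bdd: "\<And>x. \<bar>r x\<bar> \<le> B"
    and R_ft: "\<And>y. (\<integral>x. complex_of_real (r x) * iexp (y*x) \<partial>lborel) = complex_of_real (R y)"
  shows "(\<lambda>k. \<integral>y. complex_of_real (R y) * iexp (y*c) * complex_of_real (gauss_kernel k y) \<partial>lborel)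
           \<longlonglongrightarrow> complex_of_real (2*pi*r(-c))"
proof -
  have [measurable]: "r \<in> borel_measurable borel" using r_int by auto
  have "(\<lambda>k. \<integral>z. std_normal_density z * r (-c + z / real (Suc k)) \<partial>lborel)
        \<longlonglongrightarrow> (\<integral>z. std_normal_density z * r (-c) \<partial>lborel)"
  proof (rule integral_dominated_convergence[where w="\<lambda>z. std_normal_density z * \<bar>B\<bar>"])
    show "AE z in lborel. (\<lambda>k. std_normal_density z * r (-c + z / real (Suc k)))
             \<longlonglongrightarrow> std_normal_density z * r (-c)"
    proof (intro AE_I2 tendsto_intros)
      fix z
      have "(\<lambda>k. -c + z / real (Suc k)) \<longlonglongrightarrow> -c + z*0" unfolding divide_inverse
        by (intro tendsto_intros LIMSEQ_inverse_real_of_nat)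
      moreover have "isCont r (-c)" using r_cont by (simp add: continuous_on_eq_continuous_at)
      ultimately show "(\<lambda>k. r (-c + z / real (Suc k))) \<longlonglongrightarrow> r (-c)"
        using isCont_tendsto_compose by fastforce
    qed
    show "AE z in lborel. norm (std_normal_density z * r (-c + z / real (Suc k)))
            \<le> std_normal_density z * \<bar>B\<bar>" for k
      using r_bdd by (auto simp: abs_mult intro!: mult_left_mono order.trans[OF _ abs_ge_self])
  qed auto
  then have "(\<lambda>k. complex_of_real (2*pi * (\<integral>z. std_normal_density z * r (-c + z / real (Suc k)) \<partial>lborel)))
         \<longlonglongrightarrow> complex_of_real (2*pi*r(-c))"
    by (intro tendsto_intros) simp
  then show ?thesis
    unfolding gauss_kernel_def fourier_gaussian_regularised[OF of_nat_0_less_iff[THEN iffD2, OF zero_less_Suc] r_int R_ft] .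
qed

text \<open>A nonnegative Fourier transform of a bounded continuous integrable function is
  integrable: monotone convergence with the Gaussian kernels, evaluated at \<open>c = 0\<close>.\<close>
lemma fourier_transform_integrable:
  fixes r R :: "real \<Rightarrow> real" and B :: real
  assumes r_int: "integrable lborel r" and r_cont: "continuous_on UNIV r"
    and r_bdd: "\<And>x. \<bar>r x\<bar> \<le> B"
    and R_meas [measurable]: "R \<in> borel_measurable borel" and R_nonneg: "\<And>y. R y \<ge> 0"
    and R_ft: "\<And>y. (\<integral>x. complex_of_real (r x) * iexp (y*x) \<partial>lborel) = complex_of_real (R y)"
  shows "integrable lborel R"
proof -
  have R_bdd: "R y \<le> (\<integral>x. \<bar>r x\<bar> \<partial>lborel)" for y
  proof -
    have "R y = norm (complex_of_real (R y))" using R_nonneg[of y] by simp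
    also have "\<dots> = norm (\<integral>x. complex_of_real (r x) * iexp (y*x) \<partial>lborel)" by (simp only: R_ft)
    also have "\<dots> \<le> (\<integral>x. norm (complex_of_real (r x) * iexp (y*x)) \<partial>lborel)"
      by (rule integral_norm_bound)
    finally show ?thesis by (simp add: norm_mult)
  qed
  have RK_int: "integrable lborel (\<lambda>y. R y * gauss_kernel k y)" for k
    by (rule Bochner_Integration.integrable_bound[where f="\<lambda>y. (\<integral>x. \<bar>r x\<bar> \<partial>lborel) * gauss_kernel k y"])
       (use gaussian_integrable[of "real (Suc k)"] R_bdd R_nonneg gauss_kernel_bounds[of k]
         in \<open>auto simp: gauss_kernel_def intro!: mult_right_mono\<close>)
  have mono_lim: "(\<lambda>k. \<integral>\<^sup>+y. ennreal (R y * gauss_kernel k y) \<partial>lborel) \<longlonglongrightarrow> (\<integral>\<^sup>+y. ennreal (R y) \<partial>lborel)"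
  proof (rule nn_integral_LIMSEQ)
    show "incseq (\<lambda>k y. ennreal (R y * gauss_kernel k y))"
      using gauss_kernel_incseq R_nonneg
      by (auto simp: incseq_def le_fun_def intro!: ennreal_leI mult_left_mono)
    show "(\<lambda>k. ennreal (R y * gauss_kernel k y)) \<longlonglongrightarrow> ennreal (R y)" for y
      using gauss_kernel_tendsto[of y] by (auto intro!: tendsto_eq_intros)
  qed simp
  have "(\<integral>\<^sup>+y. ennreal (R y * gauss_kernel k y) \<partial>lborel)
      = ennreal (\<integral>y. R y * gauss_kernel k y \<partial>lborel)" for k
    using RK_int R_nonneg gauss_kernel_bounds by (intro nn_integral_eq_integral) auto
  with mono_lim have lim1: "(\<lambda>k. ennreal (\<integral>y. R y * gauss_kernel k y \<partial>lborel)) \<longlonglongrightarrow> (\<integral>\<^sup>+y. ennreal (R y) \<partial>lborel)"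
    by simp
  have "(\<integral>y. complex_of_real (R y) * iexp (y*0) * complex_of_real (gauss_kernel k y) \<partial>lborel)
      = complex_of_real (\<integral>y. R y * gauss_kernel k y \<partial>lborel)" for k
    by (simp flip: integral_complex_of_real)
  with fourier_regularised_limit[OF r_int r_cont r_bdd R_ft, of 0]
  have "(\<lambda>k. complex_of_real (\<integral>y. R y * gauss_kernel k y \<partial>lborel)) \<longlonglongrightarrow> complex_of_real (2*pi*r(-0))"
    by simp
  from tendsto_Re[OF this] have "(\<lambda>k. \<integral>y. R y * gauss_kernel k y \<partial>lborel) \<longlonglongrightarrow> 2*pi*r 0"
    by simp
  then have lim2: "(\<lambda>k. ennreal (\<integral>y. R y * gauss_kernel k y \<partial>lborel)) \<longlonglongrightarrow> ennreal (2*pi*r 0)"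
    by (rule tendsto_ennrealI)
  from LIMSEQ_unique[OF lim1 lim2] have "(\<integral>\<^sup>+y. ennreal (R y) \<partial>lborel) = ennreal (2*pi*r 0)" .
  then show ?thesis using R_nonneg by (intro integrableI_nonneg) auto
qed

lemma fourier_inversion_nonneg:
  fixes r R :: "real \<Rightarrow> real" and B c :: real
  assumes r_int: "integrable lborel r" and r_cont: "continuous_on UNIV r"
    and r_bdd: "\<And>x. \<bar>r x\<bar> \<le> B"
    and R_meas [measurable]: "R \<in> borel_measurable borel" and R_nonneg: "\<And>y. R y \<ge> 0"
    and R_ft: "\<And>y. (\<integral>x. complex_of_real (r x) * iexp (y*x) \<partial>lborel) = complex_of_real (R y)"
  shows "(\<integral>y. complex_of_real (R y) * iexp (y*c) \<partial>lborel) = complex_of_real (2*pi*r(-c))"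
proof -
  have "(\<lambda>k. \<integral>y. complex_of_real (R y) * iexp (y*c) * complex_of_real (gauss_kernel k y) \<partial>lborel)
      \<longlonglongrightarrow> (\<integral>y. complex_of_real (R y) * iexp (y*c) \<partial>lborel)"
  proof (rule integral_dominated_convergence[where w=R])
    show "integrable lborel R"
      by (rule fourier_transform_integrable[OF assms(1-6)])
    show "AE y in lborel. (\<lambda>k. complex_of_real (R y) * iexp (y*c) * complex_of_real (gauss_kernel k y))
            \<longlonglongrightarrow> complex_of_real (R y) * iexp (y*c)"
    proof (rule AE_I2)
      fix y
      have "(\<lambda>k. complex_of_real (R y) * iexp (y*c) * complex_of_real (gauss_kernel k y))
              \<longlonglongrightarrow> complex_of_real (R y) * iexp (y*c) * complex_of_real 1"
        by (intro tendsto_intros gauss_kernel_tendsto)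
      then show "(\<lambda>k. complex_of_real (R y) * iexp (y*c) * complex_of_real (gauss_kernel k y))
              \<longlonglongrightarrow> complex_of_real (R y) * iexp (y*c)" by simp
    qed
    show "AE y in lborel. norm (complex_of_real (R y) * iexp (y*c) * complex_of_real (gauss_kernel k y)) \<le> R y" for k
      using R_nonneg gauss_kernel_bounds[of k] by (auto simp: norm_mult intro!: mult_left_le)
  qed auto
  with fourier_regularised_limit[OF r_int r_cont r_bdd R_ft] show ?thesis
    using LIMSEQ_unique by blast
qed

lemma absolutely_integrable_UNIV_lborel:
  fixes g :: "real \<Rightarrow> 'a::euclidean_space"
  assumes "g absolutely_integrable_on UNIV" "g \<in> borel_measurable borel"
  shows "integrable lborel g" "integral\<^sup>L lborel g = integral UNIV g"
proof -
  have "integrable lebesgue g" using assms(1) unfolding set_integrable_def by simp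
  moreover have m: "g \<in> borel_measurable lborel" using assms(2) by simp
  ultimately show i: "integrable lborel g" using integrable_completion[OF m] by simp
  show "integral\<^sup>L lborel g = integral UNIV g" using integral_lborel[OF i] by simp
qed

text \<open>Euler's integral after the substitution \<open>t = e\<^sup>v\<close>:
  \<open>\<Gamma>(s) = \<integral> exp (s v - e\<^sup>v) dv\<close> for \<open>Re s > 0\<close>.\<close>
lemma Gamma_exp_substitution:
  fixes s :: complex assumes s: "Re s > 0"
  shows "integrable lborel (\<lambda>v. exp (s * complex_of_real v) / complex_of_real (exp (exp v)))"
    and "(\<integral>v. exp (s * complex_of_real v) / complex_of_real (exp (exp v)) \<partial>lborel) = Gamma s"
proof -
  define f where "f t = complex_of_real t powr (s - 1) / complex_of_real (exp t)" for t
  define h where "h v = exp (s * complex_of_real v) / complex_of_real (exp (exp v))" for v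
  have h_eq: "h v = \<bar>exp v\<bar> *\<^sub>R f (exp v)" for v
  proof -
    have "complex_of_real (exp v) powr (s - 1) = exp ((s - 1) * complex_of_real v)"
      by (simp add: powr_def Ln_of_real)
    moreover have "complex_of_real (exp v) = exp (complex_of_real v)" by (simp add: exp_of_real)
    ultimately have "complex_of_real (exp v) * complex_of_real (exp v) powr (s - 1) = exp (s * complex_of_real v)"
      by (simp add: mult_exp_exp algebra_simps)
    then show ?thesis unfolding h_def f_def by (simp add: scaleR_conv_of_real)
  qed
  have range_exp: "exp ` (UNIV :: real set) = {0<..}"
    by (auto simp: image_iff intro: exp_ln[symmetric])
  have "f absolutely_integrable_on exp ` UNIV \<and> integral (exp ` UNIV) f = Gamma s"
    unfolding range_exp f_def
    using absolutely_integrable_Gamma_integral'[OF s] Gamma_integral_complex'[OF s]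
    by (auto intro: integral_unique)
  then have h_abs: "h absolutely_integrable_on UNIV" and h_int: "integral UNIV h = Gamma s"
    using has_absolute_integral_change_of_variables_real[of UNIV exp exp f "Gamma s"]
    by (simp_all add: h_eq[abs_def] DERIV_exp inj_on_def)
  have "h \<in> borel_measurable borel" unfolding h_def by measurable
  from absolutely_integrable_UNIV_lborel[OF h_abs this] h_int
  have "integrable lborel h" "integral\<^sup>L lborel h = Gamma s" by simp_all
  then show "integrable lborel (\<lambda>v. exp (s * complex_of_real v) / complex_of_real (exp (exp v)))"
    "(\<integral>v. exp (s * complex_of_real v) / complex_of_real (exp (exp v)) \<partial>lborel) = Gamma s"
    unfolding h_def by auto
qed

text \<open>The density \<open>exp (\<sigma> u - e\<^sup>u)\<close>, whose Fourier transform is \<open>\<Gamma>\<close> on the vertical line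
  \<open>Re z = \<sigma>\<close>.\<close>
definition gamma_density :: "real \<Rightarrow> real \<Rightarrow> real" where
  "gamma_density \<sigma> u = exp (\<sigma> * u - exp u)"

lemma gamma_density_measurable [measurable]: "gamma_density \<sigma> \<in> borel_measurable borel"
  unfolding gamma_density_def by measurable

lemma gamma_density_pos: "gamma_density \<sigma> u > 0"
  unfolding gamma_density_def by simp

lemma gamma_density_fourier:
  fixes \<sigma> y :: real assumes "\<sigma> > 0"
  shows "integrable lborel (\<lambda>u. complex_of_real (gamma_density \<sigma> u) * iexp (y * u))"
    and "(\<integral>u. complex_of_real (gamma_density \<sigma> u) * iexp (y * u) \<partial>lborel) = Gamma (Complex \<sigma> y)"
proof -
  have "exp (Complex \<sigma> y * complex_of_real v) / complex_of_real (exp (exp v))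
      = complex_of_real (gamma_density \<sigma> v) * iexp (y * v)" for v
  proof -
    have "Complex \<sigma> y * complex_of_real v = complex_of_real (\<sigma> * v) + \<i> * complex_of_real (y * v)"
      by (simp add: complex_eq_iff)
    then have "exp (Complex \<sigma> y * complex_of_real v) = complex_of_real (exp (\<sigma> * v)) * iexp (y * v)"
      by (simp only: exp_add exp_of_real)
    then show ?thesis by (simp add: gamma_density_def exp_diff)
  qed
  moreover have "Re (Complex \<sigma> y) > 0" using assms by simp
  ultimately show "integrable lborel (\<lambda>u. complex_of_real (gamma_density \<sigma> u) * iexp (y * u))"
    "(\<integral>u. complex_of_real (gamma_density \<sigma> u) * iexp (y * u) \<partial>lborel) = Gamma (Complex \<sigma> y)"
    using Gamma_exp_substitution[of "Complex \<sigma> y"] by simp_all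
qed

lemma gamma_density_integral:
  fixes \<sigma> :: real assumes "\<sigma> > 0"
  shows "integrable lborel (gamma_density \<sigma>)" and "(\<integral>u. gamma_density \<sigma> u \<partial>lborel) = Gamma \<sigma>"
proof -
  have "Complex \<sigma> 0 = complex_of_real \<sigma>" by (simp add: complex_eq_iff)
  then have "integrable lborel (\<lambda>u. complex_of_real (gamma_density \<sigma> u))"
    "complex_of_real (\<integral>u. gamma_density \<sigma> u \<partial>lborel) = complex_of_real (Gamma \<sigma>)"
    using gamma_density_fourier[OF assms, of 0] by (simp_all add: Gamma_complex_of_real)
  then show "integrable lborel (gamma_density \<sigma>)" "(\<integral>u. gamma_density \<sigma> u \<partial>lborel) = Gamma \<sigma>"
    by (simp_all add: complex_of_real_integrable_eq)
qed

lemma gamma_density_rescaled: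
  fixes \<sigma> K :: real assumes "\<sigma> > 0" "K > 0"
  shows "integrable lborel (\<lambda>v. exp (\<sigma> * v - K * exp v))"
    and "(\<integral>v. exp (\<sigma> * v - K * exp v) \<partial>lborel) = Gamma \<sigma> * K powr (-\<sigma>)"
proof -
  have eq: "(\<lambda>v. exp (\<sigma> * v - K * exp v)) = (\<lambda>v. K powr (-\<sigma>) * gamma_density \<sigma> (ln K + 1 * v))"
  proof
    fix v
    have "K powr (-\<sigma>) * gamma_density \<sigma> (ln K + 1 * v)
        = exp (-\<sigma> * ln K) * exp (\<sigma> * (ln K + v) - exp (ln K + v))"
      using assms by (simp add: gamma_density_def powr_def)
    also have "\<dots> = exp (\<sigma> * v - K * exp v)"
      using assms by (simp add: exp_add mult_exp_exp algebra_simps)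
    finally show "exp (\<sigma> * v - K * exp v) = K powr (-\<sigma>) * gamma_density \<sigma> (ln K + 1 * v)" ..
  qed
  note I = gamma_density_integral[OF assms(1)]
  show "integrable lborel (\<lambda>v. exp (\<sigma> * v - K * exp v))"
    unfolding eq using lborel_integrable_real_affine[OF I(1), of 1 "ln K"] by simp
  have "(\<integral>v. gamma_density \<sigma> v \<partial>lborel) = \<bar>1\<bar> *\<^sub>R (\<integral>v. gamma_density \<sigma> (ln K + 1 * v) \<partial>lborel)"
    by (rule lborel_integral_real_affine) simp
  then show "(\<integral>v. exp (\<sigma> * v - K * exp v) \<partial>lborel) = Gamma \<sigma> * K powr (-\<sigma>)"
    unfolding eq using I(2) by simp
qed

text \<open>The autocorrelation \<open>\<integral> \<gamma>(x + v) \<gamma>(v) dv\<close> of the density in closed form; by the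
  convolution theorem its Fourier transform is \<open>|\<Gamma>(\<sigma> + iy)|\<^sup>2\<close>.\<close>
definition gamma_autocorr :: "real \<Rightarrow> real \<Rightarrow> real" where
  "gamma_autocorr \<sigma> x = Gamma (2*\<sigma>) * exp (\<sigma> * x) * (1 + exp x) powr (-(2*\<sigma>))"

text \<open>The autocorrelation integral reduces to a rescaled Euler integral.\<close>
lemma gamma_density_autocorr:
  fixes \<sigma> x :: real assumes "\<sigma> > 0"
  shows "integrable lborel (\<lambda>v. gamma_density \<sigma> (x + v) * gamma_density \<sigma> v)"
    and "(\<integral>v. gamma_density \<sigma> (x + v) * gamma_density \<sigma> v \<partial>lborel) = gamma_autocorr \<sigma> x"
proof -
  have "gamma_density \<sigma> (x + v) * gamma_density \<sigma> v
      = exp (\<sigma> * x) * exp ((2*\<sigma>) * v - (1 + exp x) * exp v)" for v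
  proof -
    have "gamma_density \<sigma> (x + v) * gamma_density \<sigma> v = exp (\<sigma> * (x+v) - exp (x+v) + (\<sigma> * v - exp v))"
      unfolding gamma_density_def by (simp only: mult_exp_exp)
    also have "\<sigma> * (x+v) - exp (x+v) + (\<sigma> * v - exp v) = \<sigma> * x + ((2*\<sigma>) * v - (1 + exp x) * exp v)"
      by (simp add: exp_add algebra_simps)
    finally show ?thesis by (simp only: exp_add)
  qed
  moreover have "2*\<sigma> > 0" "1 + exp x > 0" using assms by (auto intro: add_pos_pos)
  note R = gamma_density_rescaled[OF this]
  ultimately show "integrable lborel (\<lambda>v. gamma_density \<sigma> (x + v) * gamma_density \<sigma> v)"
    "(\<integral>v. gamma_density \<sigma> (x + v) * gamma_density \<sigma> v \<partial>lborel) = gamma_autocorr \<sigma> x"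
    using R by (simp_all add: gamma_autocorr_def)
qed

text \<open>The integrand of the autocorrelation is integrable on the plane (Tonelli: each
  translate has the same integral), so Fubini applies to it and to its modulations.\<close>
lemma gamma_density_pair_integrable:
  fixes \<sigma> :: real assumes s: "\<sigma> > 0"
  shows "integrable (lborel \<Otimes>\<^sub>M lborel) (\<lambda>(v, x). gamma_density \<sigma> (x + v) * gamma_density \<sigma> v)"
proof (rule lborel_pair.Fubini_integrable)
  note gI = gamma_density_integral(1)[OF s]
  have "integrable lborel (\<lambda>x. gamma_density \<sigma> (x + v))" for v
    using lborel_integrable_real_affine[OF gI, of 1 v] by (simp add: add.commute)
  then show "AE v in lborel. integrable lborel
      (\<lambda>x. case (v, x) of (v, x) \<Rightarrow> gamma_density \<sigma> (x + v) * gamma_density \<sigma> v)"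
    by simp
  have "(\<integral>x. gamma_density \<sigma> (x + v) \<partial>lborel) = (\<integral>x. gamma_density \<sigma> x \<partial>lborel)" for v
    using lborel_integral_real_affine[of 1 "gamma_density \<sigma>" v] by (simp add: add.commute)
  then have "(LBINT x. norm (case (v, x) of (v, x) \<Rightarrow> gamma_density \<sigma> (x + v) * gamma_density \<sigma> v))
      = gamma_density \<sigma> v * (\<integral>x. gamma_density \<sigma> x \<partial>lborel)" for v
    using gamma_density_pos[of \<sigma>] by (simp add: abs_mult less_imp_le)
  then show "integrable lborel (\<lambda>v. LBINT x. norm
      (case (v, x) of (v, x) \<Rightarrow> gamma_density \<sigma> (x + v) * gamma_density \<sigma> v))"
    using gI by simp
qed measurable

lemma gamma_autocorr_integrable: "\<sigma> > 0 \<Longrightarrow> integrable lborel (gamma_autocorr \<sigma>)"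
  using lborel_pair.integrable_snd[OF gamma_density_pair_integrable] gamma_density_autocorr(2)
  by (simp add: case_prod_beta')

lemma Gamma_abs_square_fourier:
  fixes \<sigma> y :: real assumes s: "\<sigma> > 0"
  shows "Gamma (Complex \<sigma> y) * cnj (Gamma (Complex \<sigma> y))
           = (\<integral>x. complex_of_real (gamma_autocorr \<sigma> x) * iexp (y * x) \<partial>lborel)"
proof -
  define H where "H v x = complex_of_real (gamma_density \<sigma> (x + v) * gamma_density \<sigma> v) * iexp (y * x)" for v x
  have H_int: "integrable (lborel \<Otimes>\<^sub>M lborel) (case_prod H)"
  proof (rule Bochner_Integration.integrable_bound[OF gamma_density_pair_integrable[OF s]])
    show "case_prod H \<in> borel_measurable (lborel \<Otimes>\<^sub>M lborel)" unfolding H_def by measurable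
    show "AE p in lborel \<Otimes>\<^sub>M lborel. norm (case_prod H p)
        \<le> norm (case p of (v, x) \<Rightarrow> gamma_density \<sigma> (x + v) * gamma_density \<sigma> v)"
      by (simp add: H_def case_prod_beta' norm_mult)
  qed
  define G where "G = Gamma (Complex \<sigma> y)"
  have G_eq: "G = (\<integral>u. complex_of_real (gamma_density \<sigma> u) * iexp (y * u) \<partial>lborel)"
    unfolding G_def by (rule gamma_density_fourier(2)[OF s, symmetric])
  have cnj_G: "cnj G = (\<integral>v. complex_of_real (gamma_density \<sigma> v) * iexp (-(y * v)) \<partial>lborel)"
    unfolding G_eq by (simp flip: Bochner_Integration.integral_cnj add: exp_cnj)
  have inner: "complex_of_real (gamma_density \<sigma> v) * iexp (-(y * v)) * G = (\<integral>x. H v x \<partial>lborel)" for v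
  proof -
    have "G = (\<integral>x. complex_of_real (gamma_density \<sigma> (v + 1 * x)) * iexp (y * (v + 1 * x)) \<partial>lborel)"
      unfolding G_eq
      using lborel_integral_real_affine[of 1 "\<lambda>u. complex_of_real (gamma_density \<sigma> u) * iexp (y * u)" v]
      by simp
    moreover have "complex_of_real (gamma_density \<sigma> v) * iexp (-(y * v))
        * (complex_of_real (gamma_density \<sigma> (v + 1 * x)) * iexp (y * (v + 1 * x))) = H v x" for x
    proof -
      have "iexp (-(y * v)) * iexp (y * (v + 1 * x)) = iexp (y * x)"
        by (simp add: exp_add[symmetric] algebra_simps)
      then show ?thesis unfolding H_def by (simp add: add.commute mult_ac)
    qed
    ultimately show ?thesis by (simp flip: integral_mult_right_zero)
  qed
  have outer: "(\<integral>v. H v x \<partial>lborel) = complex_of_real (gamma_autocorr \<sigma> x) * iexp (y * x)" for x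
  proof -
    have "(\<integral>v. H v x \<partial>lborel)
        = complex_of_real (\<integral>v. gamma_density \<sigma> (x + v) * gamma_density \<sigma> v \<partial>lborel) * iexp (y * x)"
      unfolding H_def by (simp only: integral_mult_left_zero integral_complex_of_real)
    then show ?thesis by (simp only: gamma_density_autocorr(2)[OF s])
  qed
  have "G * cnj G = cnj G * G" by (rule mult.commute)
  also have "\<dots> = (\<integral>v. complex_of_real (gamma_density \<sigma> v) * iexp (-(y * v)) * G \<partial>lborel)"
    unfolding cnj_G by (rule integral_mult_left_zero[symmetric])
  also have "\<dots> = (\<integral>v. (\<integral>x. H v x \<partial>lborel) \<partial>lborel)" by (simp only: inner)
  also have "\<dots> = (\<integral>x. (\<integral>v. H v x \<partial>lborel) \<partial>lborel)"
    using lborel_pair.Fubini_integral[OF H_int] by simp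
  finally show ?thesis unfolding G_def outer .
qed

text \<open>The autocorrelation is bounded by \<open>\<Gamma>(2\<sigma>)\<close>, since \<open>e\<^sup>x \<le> (1 + e\<^sup>x)\<^sup>2\<close>.\<close>
lemma gamma_autocorr_bound:
  fixes \<sigma> x :: real assumes s: "\<sigma> > 0"
  shows "\<bar>gamma_autocorr \<sigma> x\<bar> \<le> Gamma (2*\<sigma>)"
proof -
  have e: "exp x \<le> (1 + exp x)^2" by (simp add: power2_eq_square algebra_simps add_pos_pos)
  have a: "exp (\<sigma> * x) = exp x powr \<sigma>" by (simp add: powr_def mult.commute)
  have b: "(1 + exp x) powr (2*\<sigma>) = ((1 + exp x) powr 2) powr \<sigma>"
    by (simp only: powr_powr)
  have c: "(1 + exp x) powr 2 = (1 + exp x)^2"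
    by (subst powr_realpow[symmetric]) (auto intro: add_pos_pos)
  have "exp (\<sigma> * x) \<le> (1 + exp x) powr (2*\<sigma>)"
    unfolding a b c using s e by (intro powr_mono2) auto
  moreover have "1 + exp x \<noteq> 0" using exp_gt_zero[of x] by linarith
  then have pos: "(1 + exp x) powr (2*\<sigma>) > 0" by simp
  ultimately have "exp (\<sigma> * x) * (1 + exp x) powr (-(2*\<sigma>)) \<le> 1"
    by (simp add: powr_minus divide_inverse[symmetric] pos_divide_le_eq)
  moreover have "Gamma (2*\<sigma>) > 0" using s by (intro Gamma_real_pos) simp
  ultimately show ?thesis unfolding gamma_autocorr_def
    by (simp add: abs_mult mult.assoc mult_left_le)
qed

lemma gamma_autocorr_continuous: "continuous_on UNIV (gamma_autocorr \<sigma>)"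
  unfolding gamma_autocorr_def[abs_def]
  by (intro continuous_intros continuous_on_powr) (auto intro: add_pos_pos simp: add_nonneg_eq_0_iff)

text \<open>Measurability of \<open>\<Gamma>\<close> (the inverse of the continuous \<open>rGamma\<close>) and of its restriction to
  vertical lines.\<close>
lemma Gamma_complex_measurable [measurable]: "(Gamma :: complex \<Rightarrow> complex) \<in> borel_measurable borel"
proof -
  have "rGamma \<in> borel_measurable (borel :: complex measure)"
    by (rule borel_measurable_continuous_onI) (rule continuous_on_rGamma)
  then have "(\<lambda>z. inverse (rGamma z :: complex)) \<in> borel_measurable borel" by measurable
  then show ?thesis by (simp add: rGamma_inverse_Gamma)
qed

lemma Gamma_vertical_measurable [measurable]: "(\<lambda>y. Gamma (Complex \<sigma> y)) \<in> borel_measurable borel"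
  unfolding Complex_eq by measurable

lemma Gamma_vertical_fourier:
  fixes \<sigma> c :: real assumes s: "\<sigma> > 0"
  shows "integrable lborel (\<lambda>y. (cmod (Gamma (Complex \<sigma> y)))\<^sup>2)"
    and "(\<integral>y. complex_of_real ((cmod (Gamma (Complex \<sigma> y)))\<^sup>2) * iexp (y*c) \<partial>lborel)
          = complex_of_real (2*pi*gamma_autocorr \<sigma> (-c))"
proof -
  have ft: "(\<integral>x. complex_of_real (gamma_autocorr \<sigma> x) * iexp (y*x) \<partial>lborel)
      = complex_of_real ((cmod (Gamma (Complex \<sigma> y)))\<^sup>2)" for y
    by (simp only: complex_norm_square Gamma_abs_square_fourier[OF s] mult.commute[of y])
  note inversion_hyps = gamma_autocorr_integrable[OF s] gamma_autocorr_continuous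
    gamma_autocorr_bound[OF s] _ zero_le_power2 ft
  show "integrable lborel (\<lambda>y. (cmod (Gamma (Complex \<sigma> y)))\<^sup>2)"
    by (rule fourier_transform_integrable[OF inversion_hyps]) measurable
  show "(\<integral>y. complex_of_real ((cmod (Gamma (Complex \<sigma> y)))\<^sup>2) * iexp (y*c) \<partial>lborel)
          = complex_of_real (2*pi*gamma_autocorr \<sigma> (-c))"
    by (rule fourier_inversion_nonneg[OF inversion_hyps]) measurable
qed

lemma gamma_autocorr_at_log:
  fixes a :: real and k :: nat assumes a: "a > 0"
  shows "a powr ((real k - 1) / 2) * gamma_autocorr ((real k - 1) / 2 + 1) (- ln a) / fact k
           = a ^ k / (1 + a) ^ (k + 1)"
proof -
  define s where "s = (real k - 1) / 2 + 1"
  have two_s: "2 * s = real (k + 1)" unfolding s_def by (simp add: field_simps)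
  have g: "Gamma (2 * s) = fact k" using Gamma_fact[of k] by (simp add: two_s add.commute)
  have e1: "exp (s * - ln a) = a powr (- s)" using a by (simp add: powr_def)
  have e2: "(1 + exp (- ln a)) powr (-(2 * s)) = a powr real (k + 1) / (1 + a) powr real (k + 1)"
  proof -
    have e: "1 + exp (- ln a) = (1 + a) / a" using a by (simp add: exp_minus field_simps)
    show ?thesis using a unfolding two_s powr_minus_divide e by (simp add: powr_divide)
  qed
  have "a powr ((real k - 1) / 2) * gamma_autocorr s (- ln a) / fact k
      = a powr ((real k - 1) / 2) * a powr (- s) * a powr real (k + 1) / (1 + a) powr real (k + 1)"
    unfolding gamma_autocorr_def g e1 e2 by (simp add: field_simps)
  also have "a powr ((real k - 1) / 2) * a powr (- s) * a powr real (k + 1) = a powr real k"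
  proof -
    have "(real k - 1) / 2 + - s + real (k + 1) = real k" unfolding s_def by (simp add: field_simps)
    then show ?thesis by (simp only: powr_add[symmetric])
  qed
  also have "\<dots> / (1 + a) powr real (k + 1) = a ^ k / (1 + a) ^ (k + 1)"
    using a by (simp only: powr_realpow add_pos_pos zero_less_one)
  finally show ?thesis unfolding s_def .
qed

lemma weighted_line_integral:
  fixes a :: real and k :: nat assumes a: "a > 0"
  defines "I \<equiv> (\<lambda>y. mu_weight k y *\<^sub>R exp (Complex ((real k - 1) / 2) y * complex_of_real (ln a)))"
  shows "integrable lborel I"
    and "integral\<^sup>L lborel I = complex_of_real (a ^ k / (1 + a) ^ (k + 1))"
    and "(\<integral>y. norm (I y) \<partial>lborel) = a powr ((real k - 1) / 2) / 2 ^ (k + 1)"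
proof -
  define s where "s = (real k - 1) / 2 + 1"
  have s: "s > 0" unfolding s_def by (simp add: field_simps)
  define c where "c = a powr ((real k - 1) / 2) / (2 * pi * fact k)"
  have c_nonneg: "c \<ge> 0" unfolding c_def by simp
  define R where "R y = (cmod (Gamma (Complex s y)))\<^sup>2" for y
  note F = Gamma_vertical_fourier[OF s, folded R_def]
  have "exp (Complex ((real k - 1) / 2) y * complex_of_real (ln a))
      = complex_of_real (a powr ((real k - 1) / 2)) * iexp (y * ln a)" for y
  proof -
    have "Complex ((real k - 1) / 2) y * complex_of_real (ln a)
        = complex_of_real ((real k - 1) / 2 * ln a) + \<i> * complex_of_real (y * ln a)"
      by (simp add: complex_eq_iff)
    then show ?thesis using a by (simp add: exp_add exp_of_real[symmetric] powr_def mult.commute)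
  qed
  then have I_eq: "I = (\<lambda>y. complex_of_real c * (complex_of_real (R y) * iexp (y * ln a)))"
    by (auto simp: I_def mu_weight_def scaleR_conv_of_real c_def R_def s_def)
  have "integrable lborel (\<lambda>y. complex_of_real (R y) * iexp (y * ln a))"
    by (rule Bochner_Integration.integrable_bound[OF F(1)]) (auto simp: R_def norm_mult norm_power)
  then show "integrable lborel I" unfolding I_eq by simp
  have "integral\<^sup>L lborel I = complex_of_real c * complex_of_real (2*pi*gamma_autocorr s (- ln a))"
    unfolding I_eq by (simp only: integral_mult_right_zero F(2))
  also have "\<dots> = complex_of_real (a powr ((real k - 1) / 2) * gamma_autocorr s (- ln a) / fact k)"
    by (simp add: c_def)
  also have "\<dots> = complex_of_real (a ^ k / (1 + a) ^ (k + 1))"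
    unfolding s_def gamma_autocorr_at_log[OF a] ..
  finally show "integral\<^sup>L lborel I = complex_of_real (a ^ k / (1 + a) ^ (k + 1))" .
  have "(\<lambda>y. norm (I y)) = (\<lambda>y. c * R y)"
    unfolding I_eq using c_nonneg by (auto simp: norm_mult norm_power R_def)
  then have "(\<integral>y. norm (I y) \<partial>lborel) = c * (\<integral>y. R y \<partial>lborel)" by simp
  also have "(\<integral>y. R y \<partial>lborel) = 2 * pi * gamma_autocorr s (- ln 1)"
  proof -
    have "(\<integral>y. complex_of_real (R y) * iexp (y * 0) \<partial>lborel) = complex_of_real (\<integral>y. R y \<partial>lborel)"
      by (simp flip: integral_complex_of_real)
    then show ?thesis using F(2)[of 0] by (simp only: minus_zero ln_one of_real_eq_iff)
  qed
  also have "gamma_autocorr s (- ln 1) = fact k / 2 ^ (k + 1)"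
    using gamma_autocorr_at_log[of 1 k] by (simp add: s_def field_simps)
  finally show "(\<integral>y. norm (I y) \<partial>lborel) = a powr ((real k - 1) / 2) / 2 ^ (k + 1)"
    by (simp add: c_def)
qed

text \<open>Coordinates for \<open>\<mu>\<close>: the \<open>k\<close>-th line \<open>Re z = (k - 1)/2\<close> is parametrised by \<open>y \<in> \<real>\<close>,
  so \<open>\<mu>\<close> is the image of a weighted measure on \<open>\<nat> \<times> \<real>\<close>, and \<open>\<mu>\<^sup>~\<close> the further image under
  the inverse \<open>w \<mapsto> w/(1 + w)\<close> of \<open>\<Psi>\<close>.\<close>
definition line_space :: "(nat \<times> real) measure" where
  "line_space = count_space UNIV \<Otimes>\<^sub>M lborel"

definition line_point :: "nat \<times> real \<Rightarrow> complex" where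
  "line_point = (\<lambda>(k, y). Complex ((real k - 1) / 2) y)"

definition line_weight :: "nat \<times> real \<Rightarrow> real" where
  "line_weight = (\<lambda>(k, y). mu_weight k y)"

definition Psi_inv :: "complex \<Rightarrow> complex" where
  "Psi_inv w = w / (1 + w)"

lemma sets_line_space [measurable_cong]: "sets line_space = sets (count_space UNIV \<Otimes>\<^sub>M lborel)"
  unfolding line_space_def ..

lemma index_measurable [measurable]:
  fixes f :: "nat \<Rightarrow> real"
  shows "(\<lambda>p. f (fst p)) \<in> borel_measurable (count_space UNIV \<Otimes>\<^sub>M M)"
proof -
  have "f \<in> count_space UNIV \<rightarrow>\<^sub>M borel" by simp
  from measurable_compose[OF measurable_fst this] show ?thesis by (simp add: comp_def)
qed

lemma line_point_measurable [measurable]: "line_point \<in> line_space \<rightarrow>\<^sub>M borel"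
proof -
  have "line_point = (\<lambda>p. complex_of_real ((real (fst p) - 1) / 2) + \<i> * complex_of_real (snd p))"
    unfolding line_point_def by (auto simp: complex_eq_iff)
  moreover have "(\<lambda>p. complex_of_real ((real (fst p) - 1) / 2) + \<i> * complex_of_real (snd p))
      \<in> line_space \<rightarrow>\<^sub>M borel"
    unfolding line_space_def by measurable
  ultimately show ?thesis by simp
qed

lemma line_weight_measurable [measurable]: "line_weight \<in> borel_measurable line_space"
proof -
  have "line_weight = (\<lambda>p. (cmod (Gamma (complex_of_real ((real (fst p) - 1) / 2 + 1)
                               + \<i> * complex_of_real (snd p))))\<^sup>2 / (2 * pi * fact (fst p)))"
    unfolding line_weight_def mu_weight_def by (auto simp: Complex_eq)
  moreover have "(\<lambda>p. (cmod (Gamma (complex_of_real ((real (fst p) - 1) / 2 + 1)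
                               + \<i> * complex_of_real (snd p))))\<^sup>2 / (2 * pi * fact (fst p)))
      \<in> borel_measurable line_space"
    unfolding line_space_def by measurable
  ultimately show ?thesis by simp
qed

lemma line_weight_nonneg: "line_weight p \<ge> 0"
  unfolding line_weight_def mu_weight_def by (auto split: prod.splits)

lemma Psi_inv_measurable [measurable]: "Psi_inv \<in> borel \<rightarrow>\<^sub>M borel"
  unfolding Psi_inv_def by measurable

lemma mu_tilde_lines:
  "mu_tilde = distr (density line_space (\<lambda>p. ennreal (line_weight p))) borel (\<lambda>p. Psi_inv (line_point p))"
proof -
  have "mu = distr (density line_space (\<lambda>p. ennreal (line_weight p))) borel line_point"
    unfolding mu_def line_space_def line_weight_def line_point_def by (simp add: case_prod_beta')
  then have "mu_tilde = distr (distr (density line_space (\<lambda>p. ennreal (line_weight p))) borel line_point) borel Psi_inv"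
    unfolding mu_tilde_def Psi_inv_def[abs_def] by simp
  also have "\<dots> = distr (density line_space (\<lambda>p. ennreal (line_weight p))) borel (Psi_inv \<circ> line_point)"
    by (rule distr_distr) auto
  finally show ?thesis by (simp add: comp_def)
qed

lemma sets_mu_tilde [measurable_cong]: "sets mu_tilde = sets borel"
  unfolding mu_tilde_def by simp

lemma integrable_mu_tilde_iff:
  fixes F :: "complex \<Rightarrow> 'b::{banach, second_countable_topology}"
  assumes [measurable]: "F \<in> borel_measurable borel"
  shows "integrable mu_tilde F \<longleftrightarrow> integrable line_space (\<lambda>p. line_weight p *\<^sub>R F (Psi_inv (line_point p)))"
  unfolding mu_tilde_lines
  by (subst integrable_distr_eq) (auto simp: integrable_density line_weight_nonneg)

lemma integral_mu_tilde:
  fixes F :: "complex \<Rightarrow> 'b::{banach, second_countable_topology}"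
  assumes [measurable]: "F \<in> borel_measurable borel"
  shows "integral\<^sup>L mu_tilde F = integral\<^sup>L line_space (\<lambda>p. line_weight p *\<^sub>R F (Psi_inv (line_point p)))"
  unfolding mu_tilde_lines
  by (subst integral_distr) (auto simp: integral_density line_weight_nonneg)

lemma AE_mu_tilde:
  assumes "{z. P z} \<in> sets borel" "\<And>p. P (Psi_inv (line_point p))"
  shows "AE z in mu_tilde. P z"
  unfolding mu_tilde_lines
  using assms by (subst AE_distr_iff) (auto simp: AE_density)

lemma line_space_pair_sigma_finite: "pair_sigma_finite (count_space (UNIV :: nat set)) lborel"
  by (intro pair_sigma_finite.intro sigma_finite_measure_count_space_countable)
     (auto intro: lborel.sigma_finite_measure_axioms)

lemma line_space_integrableI:
  fixes G :: "nat \<times> real \<Rightarrow> 'b::{banach, second_countable_topology}"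
  assumes "G \<in> borel_measurable line_space"
    and "summable (\<lambda>k. \<integral>y. norm (G (k, y)) \<partial>lborel)"
    and "\<And>k. integrable lborel (\<lambda>y. G (k, y))"
  shows "integrable line_space G"
  unfolding line_space_def
proof (rule pair_sigma_finite.Fubini_integrable[OF line_space_pair_sigma_finite])
  show "G \<in> borel_measurable (count_space UNIV \<Otimes>\<^sub>M lborel)" using assms(1) unfolding line_space_def .
  have "summable (\<lambda>k. norm (\<integral>y. norm (G (k, y)) \<partial>lborel))"
    using assms(2) by simp
  then show "integrable (count_space UNIV) (\<lambda>k. \<integral>y. norm (G (k, y)) \<partial>lborel)"
    by (simp add: integrable_count_space_nat_iff)
qed (use assms(3) in simp)

lemma line_space_integral_sums:
  fixes G :: "nat \<times> real \<Rightarrow> 'b::{banach, second_countable_topology}"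
  assumes "integrable line_space G"
  shows "(\<lambda>k. \<integral>y. G (k, y) \<partial>lborel) sums integral\<^sup>L line_space G"
proof -
  note psf = line_space_pair_sigma_finite
  have G: "integrable (count_space UNIV \<Otimes>\<^sub>M lborel) G" using assms unfolding line_space_def .
  have "(\<lambda>k. \<integral>y. G (k, y) \<partial>lborel) sums (\<integral>k. (\<integral>y. G (k, y) \<partial>lborel) \<partial>count_space UNIV)"
    by (rule sums_integral_count_space_nat[OF pair_sigma_finite.integrable_fst'[OF psf G]])
  also have "(\<integral>k. (\<integral>y. G (k, y) \<partial>lborel) \<partial>count_space UNIV) = integral\<^sup>L line_space G"
    unfolding line_space_def by (rule pair_sigma_finite.integral_fst'[OF psf G])
  finally show ?thesis .
qed

lemma gen_fun_on_lines:
  "gen_fun a (Psi_inv (line_point (k, y))) = exp (Complex ((real k - 1) / 2) y * complex_of_real (ln a))"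
proof -
  have "1 + line_point (k, y) \<noteq> 0"
  proof
    assume "1 + line_point (k, y) = 0"
    then have "Re (1 + line_point (k, y)) = 0" by simp
    then show False by (simp add: line_point_def field_simps)
  qed
  then have "Psi (Psi_inv (line_point (k, y))) = line_point (k, y)"
    unfolding Psi_def Psi_inv_def by (simp add: field_simps)
  then show ?thesis unfolding gen_fun_def by (simp add: line_point_def)
qed

lemma norm_gen_fun_on_lines:
  assumes "a > 0"
  shows "norm (gen_fun a (Psi_inv (line_point (k, y)))) = a powr ((real k - 1) / 2)"
  using assms by (simp add: gen_fun_on_lines norm_exp powr_def)

lemma gen_fun_measurable [measurable]: "gen_fun a \<in> borel_measurable borel"
  unfolding gen_fun_def[abs_def] Psi_def by measurable

lemma geometric_weights_sum:
  fixes a :: real assumes a: "a > 0"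
  shows "(\<lambda>k. a ^ k / (1 + a) ^ (k + 1)) sums 1"
proof -
  have "(\<lambda>k. (1 / (1 + a)) * (a / (1 + a)) ^ k) sums ((1 / (1 + a)) * (1 / (1 - a / (1 + a))))"
    using a by (intro sums_mult geometric_sums) simp
  moreover have "(1 / (1 + a)) * (1 / (1 - a / (1 + a))) = 1" using a by (simp add: field_simps)
  ultimately show ?thesis by (simp add: power_divide)
qed

text \<open>Each generator has \<open>\<mu>\<^sup>~\<close>-integral 1: the line integrals \<open>a\<^sup>k / (1 + a)\<^sup>k\<^sup>+\<^sup>1\<close> sum
  to 1, and the absolute line integrals are dominated by a geometric series.\<close>
lemma gen_fun_integral:
  fixes a :: real assumes a: "0 < a" "a \<le> 1"
  shows "integrable mu_tilde (gen_fun a)" "integral\<^sup>L mu_tilde (gen_fun a) = 1"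
proof -
  define G where "G p = line_weight p *\<^sub>R gen_fun a (Psi_inv (line_point p))" for p
  have G_line: "G (k, y) = mu_weight k y *\<^sub>R exp (Complex ((real k - 1) / 2) y * complex_of_real (ln a))"
    for k y
    unfolding G_def line_weight_def by (simp add: gen_fun_on_lines)
  note L = weighted_line_integral[OF a(1)]
  have "summable (\<lambda>k. \<integral>y. norm (G (k, y)) \<partial>lborel)"
  proof (rule summable_comparison_test)
    show "summable (\<lambda>k. a powr (-1/2) * (1/2::real)^k)"
      by (intro summable_mult summable_geometric) simp
    have bound: "a powr ((real k - 1) / 2) / 2^(k+1) \<le> a powr (-1/2) * (1/2)^k" for k
    proof -
      have "a powr ((real k - 1) / 2) \<le> a powr (-1/2)"
        using a by (intro powr_mono') (auto simp: field_simps)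
      moreover have "a powr (-1/2) \<ge> 0" by simp
      ultimately have "a powr ((real k - 1) / 2) \<le> 2 * a powr (-1/2)" by linarith
      then show ?thesis by (simp add: power_divide field_simps)
    qed
    moreover have "(\<integral>y. norm (G (k, y)) \<partial>lborel) = a powr ((real k - 1) / 2) / 2^(k+1)" for k
      unfolding G_line by (rule L(3))
    ultimately have "norm (\<integral>y. norm (G (k, y)) \<partial>lborel) \<le> a powr (-1/2) * (1/2)^k" for k
      by (metis abs_of_nonneg divide_nonneg_nonneg powr_ge_zero real_norm_def zero_le_numeral zero_le_power)
    then show "\<exists>N. \<forall>k\<ge>N. norm (\<integral>y. norm (G (k, y)) \<partial>lborel) \<le> a powr (-1/2) * (1/2)^k"
      by blast
  qed
  then have G_int: "integrable line_space G"
  proof (rule line_space_integrableI[rotated])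
    show "integrable lborel (\<lambda>y. G (k, y))" for k using L(1)[of k] by (simp add: G_line)
  qed (simp add: G_def)
  then show "integrable mu_tilde (gen_fun a)"
    unfolding G_def[abs_def] by (simp add: integrable_mu_tilde_iff)
  have sums_G: "(\<lambda>k. complex_of_real (a ^ k / (1 + a) ^ (k + 1))) sums integral\<^sup>L line_space G"
    using line_space_integral_sums[OF G_int] by (simp add: G_line L(2))
  from sums_of_real[OF geometric_weights_sum[OF a(1)], where 'a=complex] have "integral\<^sup>L line_space G = complex_of_real 1"
    using sums_G by (simp add: sums_unique2)
  then have "integral\<^sup>L line_space G = 1" by simp
  then show "integral\<^sup>L mu_tilde (gen_fun a) = 1"
    unfolding G_def[abs_def] by (simp add: integral_mu_tilde)
qed

lemma gen_fun_1: "gen_fun 1 z = 1"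
  unfolding gen_fun_def by simp

text \<open>Taking \<open>a = 1\<close>: \<open>\<mu>\<^sup>~\<close> is a probability measure.\<close>
lemma prob_space_mu_tilde: "prob_space mu_tilde"
proof -
  have I: "integrable mu_tilde (\<lambda>_. 1::complex)" "integral\<^sup>L mu_tilde (\<lambda>_. 1::complex) = 1"
    using gen_fun_integral[of 1] by (simp_all add: gen_fun_1[abs_def])
  have "emeasure mu_tilde (space mu_tilde) < \<infinity>"
    using I(1) unfolding integrable_iff_bounded by (simp add: nn_integral_const)
  then interpret finite_measure mu_tilde by (rule finite_measureI[OF less_imp_neq])
  have "measure mu_tilde (space mu_tilde) = 1" using I(2) by (simp add: scaleR_conv_of_real)
  then show ?thesis by (intro prob_spaceI) (simp add: emeasure_eq_measure)
qed

text \<open>For \<open>0 < a \<le> 1\<close> the generator \<open>a\<^sup>w\<close> is bounded by \<open>a\<^sup>-\<^sup>1\<^sup>/\<^sup>2\<close> on the support \<open>Re w \<ge> -1/2\<close>.\<close>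
lemma gen_fun_bound:
  fixes a :: real assumes a: "0 < a" "a \<le> 1"
  shows "AE z in mu_tilde. norm (gen_fun a z) \<le> a powr (-1/2)"
proof (rule AE_mu_tilde)
  fix p :: "nat \<times> real"
  obtain k y where p: "p = (k, y)" by (cases p)
  have "a powr ((real k - 1) / 2) \<le> a powr (-1/2)"
    using a by (intro powr_mono') (auto simp: field_simps)
  then show "norm (gen_fun a (Psi_inv (line_point p))) \<le> a powr (-1/2)"
    unfolding p norm_gen_fun_on_lines[OF a(1)] .
qed measurable

lemma gen_fun_mult: "0 < a \<Longrightarrow> 0 < b \<Longrightarrow> gen_fun a z * gen_fun b z = gen_fun (a * b) z"
  unfolding gen_fun_def by (simp add: ln_mult distrib_left exp_add)

lemma gen_spanE:
  assumes "g \<in> gen_span"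
  obtains n :: nat and c :: "nat \<Rightarrow> complex" and a :: "nat \<Rightarrow> real" where "\<forall>i<n. 0 < a i \<and> a i \<le> 1" "g = (\<lambda>z. \<Sum>i<n. c i * gen_fun (a i) z)"
  using assms unfolding gen_span_def by blast

text \<open>Finite combinations of generators are bounded, hence in \<open>L\<^sup>2(\<mu>\<^sup>~)\<close>.\<close>
lemma gen_span_L2: "g \<in> gen_span \<Longrightarrow> g \<in> L2 mu_tilde"
proof (elim gen_spanE)
  fix n c and a :: "nat \<Rightarrow> real"
  assume a: "\<forall>i<n. 0 < a i \<and> a i \<le> 1" and g: "g = (\<lambda>z. \<Sum>i<n. c i * gen_fun (a i) z)"
  have "AE z in mu_tilde. \<forall>i\<in>{..<n}. norm (gen_fun (a i) z) \<le> a i powr (-1/2)"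
    using a by (intro eventually_ball_finite ballI gen_fun_bound) auto
  then have "AE z in mu_tilde. cmod (g z) \<le> (\<Sum>i<n. cmod (c i) * a i powr (-1/2))"
  proof eventually_elim
    case (elim z)
    have "cmod (g z) \<le> (\<Sum>i<n. cmod (c i * gen_fun (a i) z))" unfolding g by (rule norm_sum)
    also have "\<dots> \<le> (\<Sum>i<n. cmod (c i) * a i powr (-1/2))"
      using elim by (intro sum_mono) (auto simp: norm_mult intro: mult_left_mono)
    finally show ?case .
  qed
  moreover have "g \<in> borel_measurable mu_tilde" unfolding g by measurable
  ultimately show "g \<in> L2 mu_tilde" using prob_space_mu_tilde by (intro L2_bounded)
qed

lemma gen_combination_integral:
  assumes "finite A" "\<And>i. i \<in> A \<Longrightarrow> 0 < a i \<and> a i \<le> 1"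
  shows "(\<integral>z. (\<Sum>i\<in>A. c i * gen_fun (a i) z) \<partial>mu_tilde) = (\<Sum>i\<in>A. c i)"
  using assms by (simp add: Bochner_Integration.integral_sum gen_fun_integral)

text \<open>The key identity: since \<open>a\<^sup>w b\<^sup>w = (ab)\<^sup>w\<close> and every generator has integral 1,
  \<open>\<mu>\<^sup>~\<close> is multiplicative on the span of the generators.\<close>
lemma gen_span_covariance: "g \<in> gen_span \<Longrightarrow> h \<in> gen_span \<Longrightarrow> covariance mu_tilde g h = 0"
proof (elim gen_spanE)
  fix n m c d and a b :: "nat \<Rightarrow> real"
  assume a: "\<forall>i<n. 0 < a i \<and> a i \<le> 1" and g: "g = (\<lambda>z. \<Sum>i<n. c i * gen_fun (a i) z)"
    and b: "\<forall>j<m. 0 < b j \<and> b j \<le> 1" and h: "h = (\<lambda>z. \<Sum>j<m. d j * gen_fun (b j) z)"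
  define I where "I = {..<n} \<times> {..<m}"
  have "(\<lambda>z. g z * h z) = (\<lambda>z. \<Sum>p\<in>I. (\<lambda>(i, j). c i * d j) p * gen_fun ((\<lambda>(i, j). a i * b j) p) z)"
    unfolding g h I_def sum_product sum.cartesian_product using a b
    by (intro ext sum.cong refl) (auto simp: gen_fun_mult[symmetric] mult_ac)
  moreover have "0 < (\<lambda>(i, j). a i * b j) p \<and> (\<lambda>(i, j). a i * b j) p \<le> 1" if "p \<in> I" for p
    using a b that mult_le_one[of "a (fst p)" "b (snd p)"] by (auto simp: I_def)
  ultimately have "(\<integral>z. g z * h z \<partial>mu_tilde) = (\<Sum>p\<in>I. (\<lambda>(i, j). c i * d j) p)"
    by (simp add: gen_combination_integral I_def)
  also have "\<dots> = (\<Sum>i<n. c i) * (\<Sum>j<m. d j)"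
    unfolding I_def sum_product sum.cartesian_product ..
  also have "\<dots> = integral\<^sup>L mu_tilde g * integral\<^sup>L mu_tilde h"
  proof -
    have "integral\<^sup>L mu_tilde g = (\<Sum>i<n. c i)" "integral\<^sup>L mu_tilde h = (\<Sum>j<m. d j)"
      unfolding g h using a b by (auto intro!: gen_combination_integral)
    then show ?thesis by simp
  qed
  finally show "covariance mu_tilde g h = 0"
    unfolding covariance_def by simp
qed

text \<open>By continuity the multiplicativity extends, one argument at a time, to \<open>H\<^sup>2(\<mu>\<^sup>~)\<close>.\<close>
lemma H2_covariance:
  assumes f: "f \<in> H2 mu_tilde" and h: "h \<in> H2 mu_tilde"
  shows "covariance mu_tilde f h = 0"
proof -
  note P = prob_space_mu_tilde
  have f_L2: "f \<in> L2 mu_tilde" and h_L2: "h \<in> L2 mu_tilde"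
    using f h unfolding H2_def by auto
  have span_zero: "covariance mu_tilde f k = 0" if k: "k \<in> gen_span" for k
  proof -
    have "covariance mu_tilde k f = 0"
    proof (rule covariance_zero_by_approximation[OF P gen_span_L2[OF k] f_L2])
      fix e :: real assume "e > 0"
      then obtain g where "g \<in> gen_span" "(\<integral>z. (cmod (f z - g z))\<^sup>2 \<partial>mu_tilde) < e"
        using f unfolding H2_def by blast
      then show "\<exists>g\<in>L2 mu_tilde. covariance mu_tilde k g = 0 \<and> (\<integral>z. (cmod (f z - g z))\<^sup>2 \<partial>mu_tilde) < e"
        using gen_span_covariance[OF k] gen_span_L2 by blast
    qed
    then show ?thesis by (simp add: covariance_commute)
  qed
  show ?thesis
  proof (rule covariance_zero_by_approximation[OF P f_L2 h_L2])
    fix e :: real assume "e > 0"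
    then obtain k where "k \<in> gen_span" "(\<integral>z. (cmod (h z - k z))\<^sup>2 \<partial>mu_tilde) < e"
      using h unfolding H2_def by blast
    then show "\<exists>k\<in>L2 mu_tilde. covariance mu_tilde f k = 0 \<and> (\<integral>z. (cmod (h z - k z))\<^sup>2 \<partial>mu_tilde) < e"
      using span_zero gen_span_L2 by blast
  qed
qed

text \<open>Constants belong to \<open>H\<^sup>2(\<mu>\<^sup>~)\<close>, being multiples of the generator \<open>1\<^sup>z = 1\<close>.\<close>
lemma const_in_H2: "(\<lambda>_. c) \<in> H2 mu_tilde"
proof -
  have "(\<lambda>_. c) = (\<lambda>z. \<Sum>i<Suc 0. (\<lambda>_. c) i * gen_fun ((\<lambda>_. 1) i) z)"
    by (simp add: gen_fun_1)
  then have "(\<lambda>_. c) \<in> gen_span"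
    unfolding gen_span_def by (intro CollectI exI[of _ "Suc 0"] exI[of _ "\<lambda>_. c"] exI[of _ "\<lambda>_. 1"]) simp
  then show ?thesis
    unfolding H2_def using L2_const[OF prob_space_mu_tilde] by force
qed

theorem mainTheorem18:
  fixes f :: "complex \<Rightarrow> complex"
  assumes "f \<in> H2 mu_tilde"
  shows "is_orth_proj mu_tilde (H2 mu_tilde) (\<lambda>z. cnj (f z))
           (\<lambda>z. cnj (L2_inner mu_tilde f (\<lambda>_. 1)))"
proof -
  note P = prob_space_mu_tilde
  have f_L2: "f \<in> L2 mu_tilde" using assms unfolding H2_def by simp
  define I where "I = integral\<^sup>L mu_tilde f"
  have "L2_inner mu_tilde f (\<lambda>_. 1) = I" unfolding L2_inner_def I_def by simp
  moreover have "(\<lambda>z. cnj (f z)) \<in> L2 mu_tilde"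
    using f_L2 unfolding L2_def by (simp add: measurable_compose[OF _ cnj_measurable])
  moreover have "L2_inner mu_tilde (\<lambda>z. cnj (f z) - cnj I) h = 0" if h: "h \<in> H2 mu_tilde" for h
  proof -
    have h_L2: "h \<in> L2 mu_tilde" using h unfolding H2_def by simp
    have "L2_inner mu_tilde (\<lambda>z. cnj (f z) - cnj I) h = cnj (\<integral>z. f z * h z - I * h z \<partial>mu_tilde)"
      unfolding L2_inner_def by (simp add: algebra_simps flip: Bochner_Integration.integral_cnj)
    also have "(\<integral>z. f z * h z - I * h z \<partial>mu_tilde) = covariance mu_tilde f h"
      using L2_mult_integrable[OF f_L2 h_L2] L2_integrable[OF P h_L2]
      by (simp add: covariance_def I_def)
    finally show ?thesis using H2_covariance[OF assms h] by simp
  qed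
  ultimately show ?thesis
    unfolding is_orth_proj_def using const_in_H2 by auto
qed

end
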